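(* Let $R=\bigoplus_{\alpha\in\Gamma}R_{\alpha}$ be a graded integral domain and let $\star$ be a semistar operation on $R$ such that $R^{\star}\subsetneq R_H$. Then every invertible ideal of $\mathrm{NA}(R,\star)$ is principal.
   Context: $\Gamma$ is a commutative cancellative monoid (written additively) whose quotient group $\langle\Gamma\rangle$ is torsion-free. A graded integral domain $R=\bigoplus_{\alpha\in\Gamma}R_\alpha$ is an integral domain that is the direct sum of additive subgroups $R_\alpha$ with $R_\alpha R_\beta\subseteq R_{\alpha+\beta}$. $K$ is its quotient field, $H$ the set of nonzero homogeneous elements of $R$, and $R_H$ the homogeneous quotient field. For $a\in R_H$, $C(a)$ is the $R$-submodule of $R_H$ generated by the homogeneous components of $a$; for $f=f_0+\cdots+f_nX^n\in R[X]$, $A_f:=\sum_i C(f_i)$. A semistar operation on $R$ is a map $\star$ from the set $\overline{\mathcal F}(R)$ of nonzero $R$-submodules of $K$ to itself, $E\mapsto E^\star$, such that for all $0\ne x\in K$ and $E,F$: $(xE)^\star=xE^\star$; $E\subseteq F\Rightarrow E^\star\subseteq F^\star$; $E\subseteq E^\star$; $(E^\star)^\star=E^\star$. $N(\star):=\{f\in R[X]: f\ne0,\ A_f^\star=R^\star\}$ and $\mathrm{NA}(R,\star):=R[X]_{N(\star)}$. *)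

theory Defs
  imports "HOL-Computational_Algebra.Polynomial" "HOL-Computational_Algebra.Fraction_Field"
begin

definition subring :: "'a::field set \<Rightarrow> bool" where
  "subring R \<longleftrightarrow> 0 \<in> R \<and> 1 \<in> R \<and> (\<forall>x\<in>R. \<forall>y\<in>R. x + y \<in> R \<and> x - y \<in> R \<and> x * y \<in> R)"

definition submodule :: "'a::field set \<Rightarrow> 'a set \<Rightarrow> bool" where
  "submodule R M \<longleftrightarrow> 0 \<in> M \<and> (\<forall>x\<in>M. \<forall>y\<in>M. x + y \<in> M) \<and> (\<forall>r\<in>R. \<forall>x\<in>M. r * x \<in> M)"

definition gen_mod :: "'a::field set \<Rightarrow> 'a set \<Rightarrow> 'a set" where
  "gen_mod R S = {x. \<exists>n::nat. \<exists>r s. (\<forall>i<n. r i \<in> R \<and> s i \<in> S) \<and> x = (\<Sum>i<n. r i * s i)}"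

definition mod_prod :: "'a::field set \<Rightarrow> 'a set \<Rightarrow> 'a set" where
  "mod_prod A B = {x. \<exists>n::nat. \<exists>a b. (\<forall>i<n. a i \<in> A \<and> b i \<in> B) \<and> x = (\<Sum>i<n. a i * b i)}"

definition ideal_of :: "'a::field set \<Rightarrow> 'a set \<Rightarrow> bool" where
  "ideal_of D I \<longleftrightarrow> I \<subseteq> D \<and> submodule D I"

definition invertible_ideal :: "'a::field set \<Rightarrow> 'a set \<Rightarrow> bool" where
  "invertible_ideal D I \<longleftrightarrow> ideal_of D I \<and> (\<exists>J. submodule D J \<and> mod_prod I J = D)"

definition principal_ideal :: "'a::field set \<Rightarrow> 'a set \<Rightarrow> bool" where
  "principal_ideal D I \<longleftrightarrow> (\<exists>a\<in>D. I = {d * a | d. d \<in> D})"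

definition ntimes :: "nat \<Rightarrow> 'g::comm_monoid_add \<Rightarrow> 'g" where
  "ntimes n a = (\<Sum>i<n. a)"

text \<open>The quotient group of the cancellative monoid is torsion-free.\<close>
definition torsion_free_quotient :: "'g::cancel_comm_monoid_add itself \<Rightarrow> bool" where
  "torsion_free_quotient _ \<longleftrightarrow> (\<forall>n>0. \<forall>a b::'g. ntimes n a = ntimes n b \<longrightarrow> a = b)"

definition is_decomp :: "('g \<Rightarrow> 'k::field set) \<Rightarrow> 'k \<Rightarrow> ('g \<Rightarrow> 'k) \<Rightarrow> bool" where
  "is_decomp gr x c \<longleftrightarrow> finite {\<alpha>. c \<alpha> \<noteq> 0} \<and> (\<forall>\<alpha>. c \<alpha> \<in> gr \<alpha>) \<and> x = (\<Sum>\<alpha>\<in>{\<alpha>. c \<alpha> \<noteq> 0}. c \<alpha>)"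

definition graded_domain :: "'k::field set \<Rightarrow> ('g::cancel_comm_monoid_add \<Rightarrow> 'k set) \<Rightarrow> bool" where
  "graded_domain R gr \<longleftrightarrow> subring R \<and>
     (\<forall>\<alpha>. gr \<alpha> \<subseteq> R \<and> 0 \<in> gr \<alpha> \<and> (\<forall>x\<in>gr \<alpha>. \<forall>y\<in>gr \<alpha>. x - y \<in> gr \<alpha>)) \<and>
     (\<forall>\<alpha> \<beta>. \<forall>x\<in>gr \<alpha>. \<forall>y\<in>gr \<beta>. x * y \<in> gr (\<alpha> + \<beta>)) \<and>
     (\<forall>x\<in>R. \<exists>!c. is_decomp gr x c)"

definition components :: "('g \<Rightarrow> 'k::field set) \<Rightarrow> 'k \<Rightarrow> 'g \<Rightarrow> 'k" where
  "components gr x = (THE c. is_decomp gr x c)"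

definition homog :: "('g \<Rightarrow> 'k::field set) \<Rightarrow> 'k set" where
  "homog gr = {x. x \<noteq> 0 \<and> (\<exists>\<alpha>. x \<in> gr \<alpha>)}"

definition homog_quot :: "'k::field set \<Rightarrow> ('g \<Rightarrow> 'k set) \<Rightarrow> 'k set" where
  "homog_quot R gr = {a / s | a s. a \<in> R \<and> s \<in> homog gr}"

definition content_mod :: "'k::field set \<Rightarrow> ('g \<Rightarrow> 'k set) \<Rightarrow> 'k \<Rightarrow> 'k set" where
  "content_mod R gr a = gen_mod R (range (components gr a))"

definition A_poly :: "'k::field set \<Rightarrow> ('g \<Rightarrow> 'k set) \<Rightarrow> 'k poly \<Rightarrow> 'k set" where
  "A_poly R gr f = {x. \<exists>y. (\<forall>i\<le>degree f. y i \<in> content_mod R gr (coeff f i)) \<and> x = (\<Sum>i\<le>degree f. y i)}"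

definition Fbar :: "'k::field set \<Rightarrow> 'k set set" where
  "Fbar R = {E. submodule R E \<and> E \<noteq> {0}}"

definition semistar :: "'k::field set \<Rightarrow> ('k set \<Rightarrow> 'k set) \<Rightarrow> bool" where
  "semistar R st \<longleftrightarrow>
     (\<forall>E\<in>Fbar R. st E \<in> Fbar R) \<and>
     (\<forall>E\<in>Fbar R. \<forall>x. x \<noteq> 0 \<longrightarrow> st ((\<lambda>e. x * e) ` E) = (\<lambda>e. x * e) ` st E) \<and>
     (\<forall>E\<in>Fbar R. \<forall>F\<in>Fbar R. E \<subseteq> F \<longrightarrow> st E \<subseteq> st F) \<and>
     (\<forall>E\<in>Fbar R. E \<subseteq> st E) \<and>
     (\<forall>E\<in>Fbar R. st (st E) = st E)"

definition polys_over :: "'k::field set \<Rightarrow> 'k poly set" where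
  "polys_over R = {f. \<forall>i. coeff f i \<in> R}"

definition N_star :: "'k::field set \<Rightarrow> ('g \<Rightarrow> 'k set) \<Rightarrow> ('k set \<Rightarrow> 'k set) \<Rightarrow> 'k poly set" where
  "N_star R gr st = {f \<in> polys_over R. f \<noteq> 0 \<and> st (A_poly R gr f) = st R}"

text \<open>NA(R,star) = R[X]_{N(star)}, as a subring of K(X) = 'k poly fract.\<close>
definition NA :: "'k::field set \<Rightarrow> ('g \<Rightarrow> 'k set) \<Rightarrow> ('k set \<Rightarrow> 'k set) \<Rightarrow> 'k poly fract set" where
  "NA R gr st = {Fract f g | f g. f \<in> polys_over R \<and> g \<in> N_star R gr st}"

end

theory Submission
  imports Defs
begin

text \<open>
  Suppose \<open>I J = NA(R,\<star>)\<close>, so \<open>1 = a\<^sub>1 b\<^sub>1 + \<dots> + a\<^sub>n b\<^sub>n\<close> with \<open>a\<^sub>i \<in> I\<close>, \<open>b\<^sub>j \<in> J\<close>.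
  Write all products \<open>a\<^sub>i b\<^sub>j = P\<^sub>i\<^sub>j / Q\<close> over one denominator \<open>Q \<in> N(\<star>)\<close>, so that
  \<open>\<Sum>\<^sub>i P\<^sub>i\<^sub>i = Q\<close>. With \<open>d\<close> larger than all degrees, Kronecker's trick
  \<open>f = \<Sum>\<^sub>i X\<^bsup>id\<^esup> a\<^sub>i \<in> I\<close>, \<open>g = \<Sum>\<^sub>j X\<^bsup>(n-j)d\<^esup> b\<^sub>j \<in> J\<close> gives \<open>f g = H / Q\<close>, where the
  coefficients of \<open>Q\<close> occur as a block of consecutive coefficients of \<open>H\<close>. Hence
  \<open>A\<^sub>Q \<subseteq> A\<^sub>H \<subseteq> R\<close>, and monotonicity of \<open>\<star>\<close> puts \<open>H\<close> into \<open>N(\<star>)\<close>. So \<open>f g\<close> is a unit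
  of \<open>NA(R,\<star>)\<close>, and \<open>I = f \<cdot> NA(R,\<star>)\<close>.
\<close>

lemma sum_lessThan_add_nat: "(\<Sum>i<(n::nat)+m. g i) = (\<Sum>i<n. g i) + (\<Sum>i<m. g (n+i))"
  by (induction m) (simp_all add: add.assoc)

lemma subring_sum:
  assumes "subring R" "\<And>i. i \<in> A \<Longrightarrow> f i \<in> R" shows "sum f A \<in> R"
proof (cases "finite A")
  case True thus ?thesis using assms(2)
    by (induction A rule: finite_induct) (use assms(1) in \<open>simp_all add: subring_def\<close>)
next
  case False thus ?thesis using assms(1) by (simp add: subring_def)
qed

lemma submodule_sum:
  assumes "submodule D M" "\<And>i. i \<in> A \<Longrightarrow> g i \<in> M" shows "sum g A \<in> M"
proof (cases "finite A")
  case True thus ?thesis using assms(2)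
    by (induction A rule: finite_induct) (use assms(1) in \<open>simp_all add: submodule_def\<close>)
next
  case False thus ?thesis using assms(1) by (simp add: submodule_def)
qed

lemma polys_over_mult:
  assumes "subring R" "p \<in> polys_over R" "q \<in> polys_over R" shows "p * q \<in> polys_over R"
  unfolding polys_over_def coeff_mult mem_Collect_eq
proof (intro allI subring_sum[OF assms(1)])
  fix n i show "coeff p i * coeff q (n - i) \<in> R"
    using assms by (simp add: polys_over_def subring_def)
qed

lemma polys_over_sum:
  assumes "subring R" "\<And>i. i \<in> A \<Longrightarrow> p i \<in> polys_over R" shows "sum p A \<in> polys_over R"
  unfolding polys_over_def coeff_sum mem_Collect_eq
  by (intro allI subring_sum[OF assms(1)]) (use assms(2) in \<open>simp add: polys_over_def\<close>)

lemma polys_over_monom: "subring R \<Longrightarrow> monom 1 k \<in> polys_over R"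
  by (simp add: polys_over_def subring_def coeff_monom)

lemma polys_over_one: "subring R \<Longrightarrow> 1 \<in> polys_over R"
  by (simp add: polys_over_def subring_def coeff_1)

lemma components_is_decomp:
  assumes "graded_domain R gr" "x \<in> R" shows "is_decomp gr x (components gr x)"
  using assms unfolding graded_domain_def components_def by (metis theI')

lemma gen_mod_zero: "0 \<in> gen_mod R S"
  unfolding gen_mod_def by (rule CollectI, rule exI[of _ 0]) simp

lemma gen_mod_generator: "1 \<in> R \<Longrightarrow> s \<in> S \<Longrightarrow> s \<in> gen_mod R S"
  unfolding gen_mod_def
  by (rule CollectI, rule exI[of _ 1], rule exI[of _ "\<lambda>_. 1"], rule exI[of _ "\<lambda>_. s"]) simp

lemma gen_mod_subset:
  assumes "subring R" "S \<subseteq> R" shows "gen_mod R S \<subseteq> R"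
proof
  fix x assume "x \<in> gen_mod R S"
  then obtain n :: nat and r s where rs: "\<forall>i<n. r i \<in> R \<and> s i \<in> S" and x: "x = (\<Sum>i<n. r i * s i)"
    unfolding gen_mod_def mem_Collect_eq by blast
  show "x \<in> R" unfolding x
    by (rule subring_sum[OF assms(1)]) (use rs assms in \<open>auto simp: subring_def\<close>)
qed

lemma submodule_gen_mod:
  assumes "subring R" shows "submodule R (gen_mod R S)"
  unfolding submodule_def
proof (intro conjI ballI)
  show "0 \<in> gen_mod R S" by (rule gen_mod_zero)
next
  fix x y assume "x \<in> gen_mod R S" "y \<in> gen_mod R S"
  then obtain n m :: nat and r s r' s' where rs: "\<forall>i<n. r i \<in> R \<and> s i \<in> S" and x: "x = (\<Sum>i<n. r i * s i)"
    and rs': "\<forall>i<m. r' i \<in> R \<and> s' i \<in> S" and y: "y = (\<Sum>i<m. r' i * s' i)"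
    unfolding gen_mod_def mem_Collect_eq by blast
  define r2 where "r2 = (\<lambda>i. if i < n then r i else r' (i - n))"
  define s2 where "s2 = (\<lambda>i. if i < n then s i else s' (i - n))"
  have "x + y = (\<Sum>i<n+m. r2 i * s2 i)"
    unfolding sum_lessThan_add_nat x y r2_def s2_def by simp
  moreover have "\<forall>i<n+m. r2 i \<in> R \<and> s2 i \<in> S" using rs rs' unfolding r2_def s2_def by auto
  ultimately show "x + y \<in> gen_mod R S" unfolding gen_mod_def mem_Collect_eq by blast
next
  fix a x assume a: "a \<in> R" and "x \<in> gen_mod R S"
  then obtain n :: nat and r s where rs: "\<forall>i<n. r i \<in> R \<and> s i \<in> S" and x: "x = (\<Sum>i<n. r i * s i)"
    unfolding gen_mod_def mem_Collect_eq by blast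
  have "a * x = (\<Sum>i<n. (a * r i) * s i)" unfolding x by (simp add: sum_distrib_left mult.assoc)
  moreover have "\<forall>i<n. a * r i \<in> R \<and> s i \<in> S" using rs a assms by (simp add: subring_def)
  ultimately show "a * x \<in> gen_mod R S" unfolding gen_mod_def
    by (intro CollectI exI[of _ n] exI[of _ "\<lambda>i. a * r i"] exI[of _ s]) simp
qed

lemma submodule_A_poly:
  assumes "subring R" shows "submodule R (A_poly R gr f)"
proof -
  have cm: "submodule R (content_mod R gr a)" for a
    unfolding content_mod_def by (rule submodule_gen_mod[OF assms])
  show ?thesis unfolding submodule_def
  proof (intro conjI ballI)
    show "0 \<in> A_poly R gr f" unfolding A_poly_def
      by (rule CollectI, rule exI[of _ "\<lambda>_. 0"]) (use cm in \<open>simp add: submodule_def\<close>)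
  next
    fix x y assume "x \<in> A_poly R gr f" "y \<in> A_poly R gr f"
    then obtain u v where u: "\<forall>i\<le>degree f. u i \<in> content_mod R gr (coeff f i)" "x = (\<Sum>i\<le>degree f. u i)"
      and v: "\<forall>i\<le>degree f. v i \<in> content_mod R gr (coeff f i)" "y = (\<Sum>i\<le>degree f. v i)"
      unfolding A_poly_def mem_Collect_eq by blast
    show "x + y \<in> A_poly R gr f" unfolding A_poly_def
      by (rule CollectI, rule exI[of _ "\<lambda>i. u i + v i"]) (use u v cm in \<open>simp add: submodule_def sum.distrib\<close>)
  next
    fix a x assume a: "a \<in> R" and "x \<in> A_poly R gr f"
    then obtain u where u: "\<forall>i\<le>degree f. u i \<in> content_mod R gr (coeff f i)" "x = (\<Sum>i\<le>degree f. u i)"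
      unfolding A_poly_def mem_Collect_eq by blast
    show "a * x \<in> A_poly R gr f" unfolding A_poly_def
      by (rule CollectI, rule exI[of _ "\<lambda>i. a * u i"]) (use u cm a in \<open>simp add: submodule_def sum_distrib_left\<close>)
  qed
qed

lemma A_poly_subset:
  assumes gd: "graded_domain R gr" and f: "f \<in> polys_over R" shows "A_poly R gr f \<subseteq> R"
proof
  have sr: "subring R" using gd by (simp add: graded_domain_def)
  have cm: "content_mod R gr (coeff f i) \<subseteq> R" for i
  proof -
    have c: "coeff f i \<in> R" using f by (simp add: polys_over_def)
    have "range (components gr (coeff f i)) \<subseteq> R"
      using components_is_decomp[OF gd c] gd unfolding is_decomp_def graded_domain_def by blast
    thus ?thesis unfolding content_mod_def by (rule gen_mod_subset[OF sr])
  qed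
  fix x assume "x \<in> A_poly R gr f"
  then obtain u where u: "\<forall>i\<le>degree f. u i \<in> content_mod R gr (coeff f i)" "x = (\<Sum>i\<le>degree f. u i)"
    unfolding A_poly_def mem_Collect_eq by blast
  show "x \<in> R" unfolding u(2) by (rule subring_sum[OF sr]) (use u(1) cm in auto)
qed

lemma A_poly_nonzero:
  assumes gd: "graded_domain R gr" and f: "f \<in> polys_over R" and nz: "f \<noteq> 0"
  shows "A_poly R gr f \<noteq> {0}"
proof -
  have sr: "subring R" using gd by (simp add: graded_domain_def)
  let ?c = "lead_coeff f"
  have dc: "is_decomp gr ?c (components gr ?c)"
    by (rule components_is_decomp[OF gd]) (use f in \<open>simp add: polys_over_def\<close>)
  have "{\<alpha>. components gr ?c \<alpha> \<noteq> 0} \<noteq> {}"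
  proof
    assume "{\<alpha>. components gr ?c \<alpha> \<noteq> 0} = {}"
    with dc nz show False unfolding is_decomp_def by simp
  qed
  then obtain \<alpha> where \<alpha>: "components gr ?c \<alpha> \<noteq> 0" by blast
  let ?z = "components gr ?c \<alpha>"
  have "?z \<in> content_mod R gr ?c"
    unfolding content_mod_def by (rule gen_mod_generator) (use sr in \<open>auto simp: subring_def\<close>)
  hence "?z \<in> A_poly R gr f" unfolding A_poly_def
    by (intro CollectI exI[of _ "\<lambda>i. if i = degree f then ?z else 0"])
       (auto simp: content_mod_def gen_mod_zero)
  with \<alpha> show ?thesis by blast
qed

lemma A_poly_mono_shift:
  assumes Q: "Q \<noteq> 0" and co: "\<forall>i\<le>degree Q. coeff H (m+i) = coeff Q i"
  shows "A_poly R gr Q \<subseteq> A_poly R gr H"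
proof
  have dH: "m + degree Q \<le> degree H"
    using co Q by (intro le_degree) simp
  fix x assume "x \<in> A_poly R gr Q"
  then obtain y where y: "\<forall>i\<le>degree Q. y i \<in> content_mod R gr (coeff Q i)" "x = (\<Sum>i\<le>degree Q. y i)"
    unfolding A_poly_def mem_Collect_eq by blast
  define y' where "y' = (\<lambda>j. if m \<le> j \<and> j \<le> m + degree Q then y (j - m) else 0)"
  have mem: "\<forall>j\<le>degree H. y' j \<in> content_mod R gr (coeff H j)"
  proof (intro allI impI)
    fix j assume "j \<le> degree H"
    show "y' j \<in> content_mod R gr (coeff H j)"
    proof (cases "m \<le> j \<and> j \<le> m + degree Q")
      case True
      hence "coeff H j = coeff Q (j - m)" using co[rule_format, of "j - m"] by (simp add: le_diff_conv)
      thus ?thesis using True y(1) unfolding y'_def by auto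
    next
      case False hence "y' j = 0" unfolding y'_def by meson
      thus ?thesis by (simp add: content_mod_def gen_mod_zero)
    qed
  qed
  have "(\<Sum>j\<le>degree H. y' j) = (\<Sum>j\<in>{j\<in>{..degree H}. m \<le> j \<and> j \<le> m + degree Q}. y (j - m))"
    unfolding y'_def by (rule sum.inter_filter[symmetric]) simp
  also have "{j\<in>{..degree H}. m \<le> j \<and> j \<le> m + degree Q} = {m..m + degree Q}" using dH by auto
  also have "(\<Sum>j\<in>{m..m + degree Q}. y (j - m)) = (\<Sum>i\<le>degree Q. y i)"
    using sum.shift_bounds_cl_nat_ivl[of "\<lambda>j. y (j - m)" 0 m "degree Q"]
    by (simp add: atMost_atLeast0 add.commute)
  finally have "x = (\<Sum>j\<le>degree H. y' j)" using y(2) by simp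
  with mem show "x \<in> A_poly R gr H" unfolding A_poly_def by blast
qed

lemma N_star_shift_closed:
  assumes ss: "semistar R st" and gd: "graded_domain R gr" and QN: "Q \<in> N_star R gr st"
    and H: "H \<in> polys_over R" and co: "\<forall>i\<le>degree Q. coeff H (m+i) = coeff Q i"
  shows "H \<in> N_star R gr st"
proof -
  have sr: "subring R" using gd by (simp add: graded_domain_def)
  have Q: "Q \<in> polys_over R" "Q \<noteq> 0" "st (A_poly R gr Q) = st R" using QN by (auto simp: N_star_def)
  have H0: "H \<noteq> 0" using co Q(2) by (metis coeff_0 leading_coeff_0_iff order_refl)
  have RF: "R \<in> Fbar R" unfolding Fbar_def submodule_def using sr by (auto simp: subring_def)
  have AF: "A_poly R gr f \<in> Fbar R" if "f \<in> polys_over R" "f \<noteq> 0" for f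
    unfolding Fbar_def using submodule_A_poly[OF sr] A_poly_nonzero[OF gd that] by auto
  have mono: "\<forall>E\<in>Fbar R. \<forall>F\<in>Fbar R. E \<subseteq> F \<longrightarrow> st E \<subseteq> st F" using ss by (simp add: semistar_def)
  have "st (A_poly R gr Q) \<subseteq> st (A_poly R gr H)"
    using mono AF[OF Q(1,2)] AF[OF H H0] A_poly_mono_shift[OF Q(2) co] by blast
  moreover have "st (A_poly R gr H) \<subseteq> st R"
    using mono AF[OF H H0] RF A_poly_subset[OF gd H] by blast
  ultimately have "st (A_poly R gr H) = st R" using Q(3) by blast
  thus ?thesis using H H0 by (simp add: N_star_def)
qed

subsection \<open>Kronecker's trick\<close>

lemma coeff_monom_mult_block:
  fixes P :: "'a::comm_ring_1 poly"
  assumes "i < n" "j < n" "k < d" "degree P < d"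
  shows "coeff (monom 1 (i*d + (n - j)*d) * P) (n*d + k) = (if j = i then coeff P k else 0)"
proof -
  have e: "i*d + (n - j)*d = (i + (n - j)) * d" by (simp add: add_mult_distrib)
  consider "j = i" | "j < i" | "i < j" by linarith
  thus ?thesis
  proof cases
    case 1
    hence "i + (n - j) = n" using assms by simp
    thus ?thesis using 1 e by (simp add: coeff_monom_mult)
  next
    case 2
    hence "Suc n \<le> i + (n - j)" using assms by simp
    hence "Suc n * d \<le> (i + (n - j)) * d" by (rule mult_le_mono1)
    hence "n*d + k < (i + (n - j)) * d" using assms by simp
    thus ?thesis using 2 e by (simp add: coeff_monom_mult)
  next
    case 3
    hence "i + (n - j) + 1 \<le> n" using assms by simp
    hence "(i + (n - j) + 1) * d \<le> n * d" by (rule mult_le_mono1)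
    hence le: "(i + (n - j)) * d + d \<le> n * d" by (simp add: add_mult_distrib)
    hence "degree P < n*d + k - (i + (n - j)) * d" using assms by linarith
    hence "coeff P (n*d + k - (i + (n - j)) * d) = 0" by (rule coeff_eq_0)
    thus ?thesis using 3 e le by (simp add: coeff_monom_mult)
  qed
qed

lemma kronecker_diagonal_coeff:
  fixes P :: "nat \<times> nat \<Rightarrow> 'a::comm_ring_1 poly"
  assumes "\<And>i j. i < n \<Longrightarrow> j < n \<Longrightarrow> degree (P (i,j)) < d" and "k < d"
  shows "coeff (\<Sum>i<n. \<Sum>j<n. monom 1 (i*d + (n - j)*d) * P (i,j)) (n*d + k)
       = coeff (\<Sum>i<n. P (i,i)) k"
proof -
  have "coeff (\<Sum>i<n. \<Sum>j<n. monom 1 (i*d + (n - j)*d) * P (i,j)) (n*d + k)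
      = (\<Sum>i<n. \<Sum>j<n. if j = i then coeff (P (i,j)) k else 0)"
    unfolding coeff_sum by (intro sum.cong refl) (simp add: coeff_monom_mult_block assms)
  thus ?thesis by (simp add: coeff_sum)
qed

lemma sum_Fract_same_denom:
  fixes Q :: "'a::idom"
  assumes "Q \<noteq> 0" shows "(\<Sum>i\<in>A. Fract (g i) Q) = Fract (\<Sum>i\<in>A. g i) Q"
proof (cases "finite A")
  case True thus ?thesis
  proof (induction A rule: finite_induct)
    case empty thus ?case using assms by (simp add: Zero_fract_def eq_fract)
  next
    case (insert a A)
    have "Fract (g a) Q + Fract (sum g A) Q = Fract (Q * (g a + sum g A)) (Q * Q)"
      using assms by (simp add: algebra_simps)
    also have "\<dots> = Fract (g a + sum g A) Q" using assms by (rule mult_fract_cancel)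
    finally show ?case using insert by simp
  qed
next
  case False thus ?thesis using assms by (simp add: Zero_fract_def eq_fract)
qed

lemma kronecker_product_Fract:
  fixes a b :: "nat \<Rightarrow> 'a::idom poly fract"
  assumes ab: "\<And>i j. i < n \<Longrightarrow> j < n \<Longrightarrow> a i * b j = Fract (P (i,j)) Q" and Q: "Q \<noteq> 0"
  shows "(\<Sum>i<n. Fract (monom 1 (i*d)) 1 * a i) * (\<Sum>j<n. Fract (monom 1 ((n - j)*d)) 1 * b j)
       = Fract (\<Sum>i<n. \<Sum>j<n. monom 1 (i*d + (n - j)*d) * P (i,j)) Q"
proof -
  have "(\<Sum>i<n. Fract (monom 1 (i*d)) 1 * a i) * (\<Sum>j<n. Fract (monom 1 ((n - j)*d)) 1 * b j)
      = (\<Sum>i<n. \<Sum>j<n. Fract (monom 1 (i*d)) 1 * Fract (monom 1 ((n - j)*d)) 1 * (a i * b j))"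
    by (simp add: sum_product ac_simps)
  also have "\<dots> = (\<Sum>i<n. \<Sum>j<n. Fract (monom 1 (i*d + (n - j)*d) * P (i,j)) Q)"
    by (intro sum.cong refl) (simp add: ab mult_monom)
  also have "\<dots> = Fract (\<Sum>i<n. \<Sum>j<n. monom 1 (i*d + (n - j)*d) * P (i,j)) Q"
    by (simp add: sum_Fract_same_denom[OF Q])
  finally show ?thesis .
qed

definition poly_fracs :: "'k::field set \<Rightarrow> 'k poly set \<Rightarrow> 'k poly fract set" where
  "poly_fracs R N = {Fract f g | f g. f \<in> polys_over R \<and> g \<in> N}"

lemma NA_eq_poly_fracs: "NA R gr st = poly_fracs R (N_star R gr st)"
  by (simp add: NA_def poly_fracs_def)

lemma poly_fracs_poly:
  assumes sr: "subring R" and N: "N \<subseteq> polys_over R - {0}" and q: "q \<in> N" and p: "p \<in> polys_over R"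
  shows "Fract p 1 \<in> poly_fracs R N"
proof -
  have "q \<noteq> 0" using q N by blast
  hence "Fract p 1 = Fract (p * q) q" by (simp add: eq_fract)
  thus ?thesis unfolding poly_fracs_def using polys_over_mult[OF sr p] q N by blast
qed

lemma mult_mem_mod_prod: "x \<in> A \<Longrightarrow> y \<in> B \<Longrightarrow> x * y \<in> mod_prod A B"
  unfolding mod_prod_def
  by (intro CollectI exI[of _ "1::nat"] exI[of _ "\<lambda>_. x"] exI[of _ "\<lambda>_. y"]) simp

lemma zero_mem_mod_prod: "0 \<in> mod_prod A B"
  unfolding mod_prod_def by (intro CollectI exI[of _ "0::nat"]) simp

lemma mod_prod_mult_left:
  assumes "submodule D A" "u \<in> D" "v \<in> mod_prod A B" shows "u * v \<in> mod_prod A B"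
proof -
  from assms(3) obtain n :: nat and a b where ab: "\<forall>i<n. a i \<in> A \<and> b i \<in> B"
    and v: "v = (\<Sum>i<n. a i * b i)"
    unfolding mod_prod_def mem_Collect_eq by blast
  have "u * v = (\<Sum>i<n. (u * a i) * b i)" unfolding v by (simp add: sum_distrib_left mult.assoc)
  moreover have "\<forall>i<n. u * a i \<in> A \<and> b i \<in> B" using ab assms(1,2) by (simp add: submodule_def)
  ultimately show ?thesis unfolding mod_prod_def
    by (intro CollectI exI[of _ n] exI[of _ "\<lambda>i. u * a i"] exI[of _ b]) simp
qed

text \<open>
  \<open>N\<close> is not assumed multiplicatively closed; closure of \<open>poly_fracs R N\<close> under
  multiplication is supplied below by the invertible ideal.
\<close>

lemma poly_fracs_common_denom:
  assumes sr: "subring R" and N: "N \<subseteq> polys_over R - {0}" and "N \<noteq> {}"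
    and mult: "\<And>u v. u \<in> poly_fracs R N \<Longrightarrow> v \<in> poly_fracs R N \<Longrightarrow> u * v \<in> poly_fracs R N"
    and "finite S" and "\<And>s. s \<in> S \<Longrightarrow> x s \<in> poly_fracs R N"
  shows "\<exists>Q\<in>N. \<exists>P. \<forall>s\<in>S. P s \<in> polys_over R \<and> x s = Fract (P s) Q"
  using \<open>finite S\<close> assms(6)
proof (induction S rule: finite_induct)
  case empty show ?case using \<open>N \<noteq> {}\<close> by blast
next
  case (insert s S)
  from insert obtain Q P where Q: "Q \<in> N" and P: "\<forall>t\<in>S. P t \<in> polys_over R \<and> x t = Fract (P t) Q"
    by auto
  obtain p q where pq: "x s = Fract p q" "p \<in> polys_over R" "q \<in> N"
    using insert.prems[of s] unfolding poly_fracs_def by auto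
  have "Fract 1 Q * Fract 1 q \<in> poly_fracs R N"
    by (intro mult) (use Q pq(3) polys_over_one[OF sr] in \<open>auto simp: poly_fracs_def\<close>)
  then obtain p' q' where pq': "Fract 1 (Q * q) = Fract p' q'" "p' \<in> polys_over R" "q' \<in> N"
    unfolding poly_fracs_def by auto
  have nz: "Q \<noteq> 0" "q \<noteq> 0" "q' \<noteq> 0" using N Q pq(3) pq'(3) by auto
  have q': "q' = p' * (Q * q)" using pq'(1) nz by (simp add: eq_fract)
  have polys: "p * p' * Q \<in> polys_over R" "\<And>t. t \<in> S \<Longrightarrow> P t * p' * q \<in> polys_over R"
    using P pq(2,3) pq'(2) Q N sr by (auto intro!: polys_over_mult)
  show ?case
  proof (intro bexI[OF _ pq'(3)] exI[of _ "\<lambda>t. if t = s then p * p' * Q else P t * p' * q"] ballI)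
    fix t assume "t \<in> insert s S"
    thus "(if t = s then p * p' * Q else P t * p' * q) \<in> polys_over R
          \<and> x t = Fract (if t = s then p * p' * Q else P t * p' * q) q'"
      using polys P pq(1) nz q' by (cases "t = s") (auto simp: eq_fract ac_simps)
  qed
qed

lemma principal_ideal_if_mult_inverse:
  assumes I: "I \<subseteq> D" "submodule D I" and IJ: "\<And>x y. x \<in> I \<Longrightarrow> y \<in> J \<Longrightarrow> x * y \<in> D"
    and f: "f \<in> I" and g: "g \<in> J" and fg: "f * g = 1"
  shows "principal_ideal D I"
proof -
  have "I = {u * f | u. u \<in> D}"
  proof
    show "I \<subseteq> {u * f | u. u \<in> D}"
    proof
      fix x assume x: "x \<in> I"
      have "x = (x * g) * f" using fg by (simp add: ac_simps)
      thus "x \<in> {u * f | u. u \<in> D}" using IJ[OF x g] by blast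
    qed
    show "{u * f | u. u \<in> D} \<subseteq> I" using I(2) f by (auto simp: submodule_def)
  qed
  thus ?thesis unfolding principal_ideal_def using I(1) f by blast
qed

lemma invertible_ideal_poly_fracs_principal:
  assumes sr: "subring R" and N: "N \<subseteq> polys_over R - {0}"
    and shift_closed: "\<And>Q H m. Q \<in> N \<Longrightarrow> H \<in> polys_over R \<Longrightarrow>
                         \<forall>i\<le>degree Q. coeff H (m+i) = coeff Q i \<Longrightarrow> H \<in> N"
    and inv: "invertible_ideal (poly_fracs R N) I"
  shows "principal_ideal (poly_fracs R N) I"
proof -
  let ?D = "poly_fracs R N"
  from inv obtain J where I: "I \<subseteq> ?D" "submodule ?D I" and J: "submodule ?D J"
    and IJ: "mod_prod I J = ?D"
    unfolding invertible_ideal_def ideal_of_def by blast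
  have IJ_mem: "x * y \<in> ?D" if "x \<in> I" "y \<in> J" for x y
    using mult_mem_mod_prod[OF that] IJ by simp
  have D_mult: "u * v \<in> ?D" if "u \<in> ?D" "v \<in> ?D" for u v
    using mod_prod_mult_left[OF I(2) that(1), of v J] that(2) IJ by simp
  have "N \<noteq> {}" using zero_mem_mod_prod[of I J] IJ unfolding poly_fracs_def by auto
  then obtain q0 where q0: "q0 \<in> N" by blast
  have poly_D: "Fract p 1 \<in> ?D" if "p \<in> polys_over R" for p
    using poly_fracs_poly[OF sr N q0 that] .
  have "1 \<in> mod_prod I J"
    using IJ poly_D[OF polys_over_one[OF sr]] by (simp add: One_fract_def)
  then obtain n :: nat and a b where ab: "\<forall>i<n. a i \<in> I \<and> b i \<in> J" and one: "1 = (\<Sum>i<n. a i * b i)"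
    unfolding mod_prod_def mem_Collect_eq by blast
  obtain Q P where Q: "Q \<in> N"
    and P: "\<And>i j. i < n \<Longrightarrow> j < n \<Longrightarrow> P (i,j) \<in> polys_over R \<and> a i * b j = Fract (P (i,j)) Q"
    using poly_fracs_common_denom[OF sr N \<open>N \<noteq> {}\<close> D_mult, of "{..<n}\<times>{..<n}" "\<lambda>(i,j). a i * b j"]
      IJ_mem ab by fastforce
  have Q0: "Q \<noteq> 0" using Q N by blast
  have "Fract (\<Sum>i<n. P (i,i)) Q = (\<Sum>i<n. Fract (P (i,i)) Q)"
    by (simp add: sum_Fract_same_denom[OF Q0])
  also have "\<dots> = (\<Sum>i<n. a i * b i)" using P by simp
  also have "\<dots> = Fract 1 1" using one by (simp add: One_fract_def)
  finally have "Fract (\<Sum>i<n. P (i,i)) Q = Fract 1 1" .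
  hence diag: "(\<Sum>i<n. P (i,i)) = Q" using Q0 by (simp add: eq_fract)
  define d where "d = Suc (\<Sum>s\<in>{..<n}\<times>{..<n}. degree (P s))"
  have deg_P: "degree (P (i,j)) < d" if "i < n" "j < n" for i j
    unfolding d_def using that by (intro le_imp_less_Suc member_le_sum) auto
  define H where "H = (\<Sum>i<n. \<Sum>j<n. monom 1 (i*d + (n - j)*d) * P (i,j))"
  have "degree Q < d" unfolding diag[symmetric] by (rule degree_sum_less) (use deg_P d_def in auto)
  hence "\<forall>k\<le>degree Q. coeff H (n*d + k) = coeff Q k"
    unfolding H_def diag[symmetric] using kronecker_diagonal_coeff[of n P d] deg_P by simp
  moreover have "H \<in> polys_over R" unfolding H_def using P sr
    by (intro polys_over_sum polys_over_mult polys_over_monom) auto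
  ultimately have H: "H \<in> N" using shift_closed[OF Q] by blast
  define f where "f = (\<Sum>i<n. Fract (monom 1 (i*d)) 1 * a i)"
  define y where "y = (\<Sum>j<n. Fract (monom 1 ((n - j)*d)) 1 * b j)"
  have X_pow_D: "Fract (monom 1 k) 1 \<in> ?D" for k by (rule poly_D[OF polys_over_monom[OF sr]])
  have "f \<in> I" unfolding f_def using I(2) ab X_pow_D
    by (intro submodule_sum) (auto simp: submodule_def)
  moreover have "Fract Q H * y \<in> J"
  proof -
    have "y \<in> J" unfolding y_def using J ab X_pow_D
      by (intro submodule_sum) (auto simp: submodule_def)
    moreover have "Fract Q H \<in> ?D" unfolding poly_fracs_def using Q H N by blast
    ultimately show ?thesis using J by (simp add: submodule_def)
  qed
  moreover have "f * (Fract Q H * y) = 1"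
  proof -
    have H0: "H \<noteq> 0" using H N by blast
    have fy: "f * y = Fract H Q"
      unfolding f_def y_def H_def by (rule kronecker_product_Fract[OF _ Q0]) (use P in blast)
    have "f * (Fract Q H * y) = Fract Q H * (f * y)" by (simp add: ac_simps)
    also have "\<dots> = Fract (Q * H) (H * Q)" unfolding fy by simp
    also have "\<dots> = 1" using Q0 H0 by (simp add: One_fract_def eq_fract)
    finally show ?thesis .
  qed
  ultimately show ?thesis
    using principal_ideal_if_mult_inverse[OF I IJ_mem] by blast
qed

theorem theorem2p7:
  fixes R :: "'k::field set"
    and gr :: "'g::cancel_comm_monoid_add \<Rightarrow> 'k set"
    and st :: "'k set \<Rightarrow> 'k set"
  assumes tf: "torsion_free_quotient TYPE('g)"
    and gd: "graded_domain R gr"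
    and qf: "\<forall>x::'k. \<exists>a\<in>R. \<exists>b\<in>R. b \<noteq> 0 \<and> x = a / b"
    and ss: "semistar R st"
    and proper: "st R \<subset> homog_quot R gr"
  shows "\<forall>I. invertible_ideal (NA R gr st) I \<longrightarrow> principal_ideal (NA R gr st) I"
proof (intro allI impI)
  fix I assume "invertible_ideal (NA R gr st) I"
  moreover have "subring R" using gd by (simp add: graded_domain_def)
  moreover have "N_star R gr st \<subseteq> polys_over R - {0}" by (auto simp: N_star_def)
  ultimately show "principal_ideal (NA R gr st) I"
    unfolding NA_eq_poly_fracs
    using invertible_ideal_poly_fracs_principal N_star_shift_closed[OF ss gd] by blast
qed

end
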